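(* Let $X_1,\dots,X_M$ be i.i.d. random variables taking values in $[k]$, let $\hat p_i=\frac1M\sum_{j=1}^M\mathbf{1}\{X_j=i\}$, and define $L(X_1,\dots,X_M)=\sum_{i=1}^k\hat p_i(1-\hat p_i)$. Then the function $L:[k]^M\to\mathbb{R}$ satisfies the bounded difference property with parameters $c_i=\frac2M$ for all $i\in[M]$, and consequently for every $t>0$, $$\mathbb{P}\left[|L(X_1,\dots,X_M)-\mathbb{E}[L(X_1,\dots,X_M)]|\ge t\right]\le 2\exp\left(-\frac{Mt^2}{2}\right).$$
   Context: A function $f:\mathcal{X}^M\to\mathbb{R}$ has the bounded difference property with parameters $c_1,\dots,c_M$ if for every $i\in[M]$, all $x_1,\dots,x_M,x_i'\in\mathcal{X}$, $|f(x_1,\dots,x_i,\dots,x_M)-f(x_1,\dots,x_i',\dots,x_M)|\le c_i$. *)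

theory Defs
  imports "HOL-Probability.Probability"
begin

text \<open>Bounded difference property for f : S^M -> R, points of S^M represented as
  extensional functions on the index set {1..M}.\<close>
definition bounded_difference ::
  "'a set \<Rightarrow> nat \<Rightarrow> ((nat \<Rightarrow> 'a) \<Rightarrow> real) \<Rightarrow> (nat \<Rightarrow> real) \<Rightarrow> bool" where
  "bounded_difference S M f c \<longleftrightarrow>
     (\<forall>i\<in>{1..M}. \<forall>x\<in>{1..M} \<rightarrow>\<^sub>E S. \<forall>y\<in>S. \<bar>f x - f (x(i := y))\<bar> \<le> c i)"

definition phat :: "nat \<Rightarrow> (nat \<Rightarrow> nat) \<Rightarrow> nat \<Rightarrow> real" where
  "phat M x i = (\<Sum>j\<in>{1..M}. if x j = i then 1 else 0) / real M"

definition Lfun :: "nat \<Rightarrow> nat \<Rightarrow> (nat \<Rightarrow> nat) \<Rightarrow> real" where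
  "Lfun k M x = (\<Sum>i\<in>{1..k}. phat M x i * (1 - phat M x i))"

end

theory Submission
  imports Defs
begin

text \<open>
  Changing one coordinate moves only two of the empirical frequencies, each by 1/M, and
  q \<mapsto> q (1 - q) is 1-Lipschitz on [0, 1]; hence L has bounded differences 2/M.

  The tail bound is McDiarmid's inequality, which needs independence only. For independent
  variables with values in a finite set, the joint law is the product of the marginals, so
  expectations are finite sums with product weights. Averaging out one coordinate at a time
  (the Doob martingale) and applying Hoeffding's lemma to each increment, whose oscillation
  is at most c i, bounds the moment generating function by exp (l^2 (\<Sum>i. c i^2) / 8);
  the Chernoff bound with l = 4 t / (\<Sum>i. c i^2), applied to f and -f, gives
  2 exp (-2 t^2 / (\<Sum>i. c i^2)), which is 2 exp (-M t^2 / 2) for c i = 2/M.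
\<close>

lemma Hoeffdings_lemma_finite:
  fixes p h :: "'b \<Rightarrow> real"
  assumes S: "finite S" and p: "\<And>s. s \<in> S \<Longrightarrow> 0 \<le> p s" and p1: "(\<Sum>s\<in>S. p s) = 1"
    and h: "\<And>s. s \<in> S \<Longrightarrow> h s \<in> {a..b}" and h0: "(\<Sum>s\<in>S. p s * h s) = 0"
    and l: "l > 0"
  shows "(\<Sum>s\<in>S. p s * exp (l * h s)) \<le> exp (l\<^sup>2 * (b - a)\<^sup>2 / 8)"
proof -
  define N where "N = point_measure S p"
  have "emeasure N (space N) = (\<Sum>s\<in>S. ennreal (p s))"
    using S p by (simp add: N_def emeasure_point_measure_finite2 space_point_measure)
  also have "\<dots> = 1" using p p1 by (simp add: sum_ennreal)
  finally interpret N: prob_space N by (rule prob_spaceI)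
  interpret interval_bounded_random_variable N h a b
    using h by unfold_locales (auto simp: N_def space_point_measure)
  have "N.expectation h = 0"
    using S p h0 by (simp add: N_def lebesgue_integral_point_measure_finite)
  moreover have "(\<integral>\<^sup>+s. exp (l * h s) \<partial>N) = ennreal (\<Sum>s\<in>S. p s * exp (l * h s))"
    using S p by (simp add: N_def nn_integral_point_measure_finite sum_ennreal flip: ennreal_mult)
  ultimately show ?thesis
    using Hoeffdings_lemma_nn_integral_0[OF l] by simp
qed

lemma Hoeffdings_lemma_finite_oscillation:
  fixes p h :: "'b \<Rightarrow> real"
  assumes S: "finite S" and p: "\<And>s. s \<in> S \<Longrightarrow> 0 \<le> p s" and p1: "(\<Sum>s\<in>S. p s) = 1"
    and h: "\<And>s t. s \<in> S \<Longrightarrow> t \<in> S \<Longrightarrow> h s - h t \<le> c" and h0: "(\<Sum>s\<in>S. p s * h s) = 0"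
    and l: "l > 0"
  shows "(\<Sum>s\<in>S. p s * exp (l * h s)) \<le> exp (l\<^sup>2 * c\<^sup>2 / 8)"
proof -
  have "S \<noteq> {}" using p1 by auto
  then have "Min (h ` S) \<in> h ` S" using S by simp
  then obtain s0 where s0: "s0 \<in> S" "h s0 = Min (h ` S)" by auto
  then have "h s \<in> {h s0..h s0 + c}" if "s \<in> S" for s
    using S h[OF that s0(1)] that by auto
  from Hoeffdings_lemma_finite[OF S p p1 this h0 l] show ?thesis by simp
qed

definition prod_expectation ::
  "('i \<Rightarrow> 'b \<Rightarrow> real) \<Rightarrow> 'b set \<Rightarrow> 'i set \<Rightarrow> (('i \<Rightarrow> 'b) \<Rightarrow> real) \<Rightarrow> real" where
  "prod_expectation p S I f = (\<Sum>x\<in>I \<rightarrow>\<^sub>E S. (\<Prod>j\<in>I. p j (x j)) * f x)"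

definition average_coord ::
  "('i \<Rightarrow> 'b \<Rightarrow> real) \<Rightarrow> 'b set \<Rightarrow> 'i \<Rightarrow> (('i \<Rightarrow> 'b) \<Rightarrow> real) \<Rightarrow> ('i \<Rightarrow> 'b) \<Rightarrow> real" where
  "average_coord p S i f x = (\<Sum>y\<in>S. p i y * f (x(i := y)))"

lemma prod_expectation_empty: "prod_expectation p S {} f = f (\<lambda>_. undefined)"
  by (simp add: prod_expectation_def)

lemma prod_expectation_insert:
  assumes "finite I" "i \<notin> I"
  shows "prod_expectation p S (insert i I) f = prod_expectation p S I (average_coord p S i f)"
proof -
  have "(\<Prod>j\<in>I. p j ((x(i := y)) j)) = (\<Prod>j\<in>I. p j (x j))" for x y
    using assms by (intro prod.cong) auto
  then have prod_upd: "(\<Prod>j\<in>insert i I. p j ((x(i := y)) j)) = p i y * (\<Prod>j\<in>I. p j (x j))" for x y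
    using assms by simp
  have "prod_expectation p S (insert i I) f
      = (\<Sum>(y, x)\<in>S \<times> (I \<rightarrow>\<^sub>E S). (\<Prod>j\<in>insert i I. p j ((x(i := y)) j)) * f (x(i := y)))"
    unfolding prod_expectation_def PiE_insert_eq
    by (subst sum.reindex[OF inj_combinator[OF assms(2)]]) (simp add: case_prod_beta)
  also have "\<dots> = (\<Sum>y\<in>S. \<Sum>x\<in>I \<rightarrow>\<^sub>E S. p i y * (\<Prod>j\<in>I. p j (x j)) * f (x(i := y)))"
    unfolding prod_upd by (rule sum.cartesian_product [symmetric])
  also have "\<dots> = (\<Sum>x\<in>I \<rightarrow>\<^sub>E S. \<Sum>y\<in>S. p i y * (\<Prod>j\<in>I. p j (x j)) * f (x(i := y)))"
    by (rule sum.swap)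
  also have "\<dots> = prod_expectation p S I (average_coord p S i f)"
    by (simp add: prod_expectation_def average_coord_def sum_distrib_left mult_ac)
  finally show ?thesis .
qed

lemma prod_expectation_linear:
  "prod_expectation p S I (\<lambda>x. a * f x + b * g x)
     = a * prod_expectation p S I f + b * prod_expectation p S I g"
  by (simp add: prod_expectation_def sum.distrib sum_distrib_left algebra_simps)

lemma prod_expectation_mult_const:
  "prod_expectation p S I (\<lambda>x. f x * c) = prod_expectation p S I f * c"
  by (simp add: prod_expectation_def sum_distrib_right mult.assoc)

lemma prod_expectation_mono:
  assumes "\<And>j s. j \<in> I \<Longrightarrow> s \<in> S \<Longrightarrow> 0 \<le> p j s" "\<And>x. x \<in> I \<rightarrow>\<^sub>E S \<Longrightarrow> f x \<le> g x"
  shows "prod_expectation p S I f \<le> prod_expectation p S I g"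
  unfolding prod_expectation_def using assms
  by (intro sum_mono mult_left_mono prod_nonneg) (auto simp: PiE_iff)

definition bounded_difference_on ::
  "'b set \<Rightarrow> 'i set \<Rightarrow> (('i \<Rightarrow> 'b) \<Rightarrow> real) \<Rightarrow> ('i \<Rightarrow> real) \<Rightarrow> bool" where
  "bounded_difference_on S I f c \<longleftrightarrow>
     (\<forall>i\<in>I. \<forall>x\<in>I \<rightarrow>\<^sub>E S. \<forall>y\<in>S. \<bar>f x - f (x(i := y))\<bar> \<le> c i)"

lemma bounded_difference_eq_on: "bounded_difference S M f c = bounded_difference_on S {1..M} f c"
  by (simp add: bounded_difference_def bounded_difference_on_def)

lemma bounded_difference_on_uminus:
  "bounded_difference_on S I f c \<Longrightarrow> bounded_difference_on S I (\<lambda>x. - f x) c"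
  by (simp add: bounded_difference_on_def abs_minus_commute)

lemma bounded_difference_on_average_coord:
  assumes i: "i \<notin> I" and p: "\<And>s. s \<in> S \<Longrightarrow> 0 \<le> p i s" and p1: "(\<Sum>s\<in>S. p i s) = 1"
    and f: "bounded_difference_on S (insert i I) f c"
  shows "bounded_difference_on S I (average_coord p S i f) c"
  unfolding bounded_difference_on_def
proof (intro ballI)
  fix j x z assume j: "j \<in> I" and x: "x \<in> I \<rightarrow>\<^sub>E S" and z: "z \<in> S"
  have "\<bar>f (x(i := y)) - f ((x(i := y))(j := z))\<bar> \<le> c j" if "y \<in> S" for y
    using f j z x that unfolding bounded_difference_on_def by (auto simp: PiE_iff)
  then have "\<bar>p i y * (f (x(i := y)) - f ((x(i := y))(j := z)))\<bar> \<le> p i y * c j" if "y \<in> S" for y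
    using p[OF that] that by (simp add: abs_mult mult_left_mono)
  moreover have "(x(j := z))(i := y) = (x(i := y))(j := z)" for y
    using i j by (auto intro: fun_upd_twist)
  ultimately have "\<bar>\<Sum>y\<in>S. p i y * f (x(i := y)) - p i y * f ((x(j := z))(i := y))\<bar>
      \<le> (\<Sum>y\<in>S. p i y * c j)"
    by (intro order.trans[OF sum_abs] sum_mono) (simp add: right_diff_distrib)
  then show "\<bar>average_coord p S i f x - average_coord p S i f (x(j := z))\<bar> \<le> c j"
    by (simp add: average_coord_def p1 sum_subtractf flip: sum_distrib_right)
qed

lemma average_coord_exp_le:
  assumes S: "finite S" and p: "\<And>s. s \<in> S \<Longrightarrow> 0 \<le> p i s" and p1: "(\<Sum>s\<in>S. p i s) = 1"
    and f: "bounded_difference_on S (insert i I) f c" and x: "x \<in> I \<rightarrow>\<^sub>E S" and l: "l > 0"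
  shows "average_coord p S i (\<lambda>z. exp (l * (f z - average_coord p S i f x))) x
           \<le> exp (l\<^sup>2 * (c i)\<^sup>2 / 8)"
proof -
  define a where "a = average_coord p S i f x"
  have "(\<Sum>s\<in>S. p i s * exp (l * (f (x(i := s)) - a))) \<le> exp (l\<^sup>2 * (c i)\<^sup>2 / 8)"
  proof (rule Hoeffdings_lemma_finite_oscillation[OF S p p1 _ _ l])
    fix s t assume s: "s \<in> S" and t: "t \<in> S"
    have "x(i := t) \<in> insert i I \<rightarrow>\<^sub>E S" using x t by (auto simp: PiE_iff)
    with f s have "\<bar>f (x(i := t)) - f ((x(i := t))(i := s))\<bar> \<le> c i"
      unfolding bounded_difference_on_def by blast
    then show "f (x(i := s)) - a - (f (x(i := t)) - a) \<le> c i" by simp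
  next
    show "(\<Sum>s\<in>S. p i s * (f (x(i := s)) - a)) = 0"
      using p1
      by (simp add: a_def average_coord_def right_diff_distrib sum_subtractf flip: sum_distrib_right)
  qed
  then show ?thesis
    unfolding a_def [symmetric] average_coord_def [of p S i "\<lambda>z. exp (l * (f z - a))"] .
qed

lemma McDiarmid_mgf_bound:
  assumes I: "finite I" and S: "finite S"
    and p: "\<And>j s. j \<in> I \<Longrightarrow> s \<in> S \<Longrightarrow> 0 \<le> p j s" and p1: "\<And>j. j \<in> I \<Longrightarrow> (\<Sum>s\<in>S. p j s) = 1"
    and f: "bounded_difference_on S I f c" and l: "l > 0"
  shows "prod_expectation p S I (\<lambda>x. exp (l * (f x - prod_expectation p S I f)))
           \<le> exp (l\<^sup>2 * (\<Sum>i\<in>I. (c i)\<^sup>2) / 8)"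
  using I p p1 f
proof (induction I arbitrary: f rule: finite_induct)
  case empty
  then show ?case by (simp add: prod_expectation_empty)
next
  case (insert i I)
  define g where "g = average_coord p S i f"
  define m where "m = prod_expectation p S I g"
  have g: "bounded_difference_on S I g c"
    unfolding g_def using insert by (intro bounded_difference_on_average_coord) auto
  have "prod_expectation p S (insert i I) (\<lambda>x. exp (l * (f x - prod_expectation p S (insert i I) f)))
      = prod_expectation p S I (average_coord p S i (\<lambda>z. exp (l * (f z - m))))"
    using insert by (simp add: prod_expectation_insert m_def g_def)
  also have "\<dots> = prod_expectation p S I
      (\<lambda>x. exp (l * (g x - m)) * average_coord p S i (\<lambda>z. exp (l * (f z - g x))) x)"
    unfolding average_coord_def
    by (simp add: sum_distrib_left algebra_simps flip: exp_add)
  also have "\<dots> \<le> prod_expectation p S I (\<lambda>x. exp (l * (g x - m)) * exp (l\<^sup>2 * (c i)\<^sup>2 / 8))"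
    unfolding g_def using insert S l
    by (intro prod_expectation_mono mult_left_mono average_coord_exp_le) auto
  also have "\<dots> = prod_expectation p S I (\<lambda>x. exp (l * (g x - m))) * exp (l\<^sup>2 * (c i)\<^sup>2 / 8)"
    by (rule prod_expectation_mult_const)
  also have "\<dots> \<le> exp (l\<^sup>2 * (\<Sum>i\<in>I. (c i)\<^sup>2) / 8) * exp (l\<^sup>2 * (c i)\<^sup>2 / 8)"
    using insert.IH[OF _ _ g] insert.prems unfolding m_def by (intro mult_right_mono) auto
  also have "\<dots> = exp (l\<^sup>2 * (\<Sum>i\<in>insert i I. (c i)\<^sup>2) / 8)"
    using insert by (simp add: algebra_simps add_divide_distrib flip: exp_add)
  finally show ?case .
qed

lemma McDiarmid_ineq_ge:
  assumes I: "finite I" and S: "finite S"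
    and p: "\<And>j s. j \<in> I \<Longrightarrow> s \<in> S \<Longrightarrow> 0 \<le> p j s" and p1: "\<And>j. j \<in> I \<Longrightarrow> (\<Sum>s\<in>S. p j s) = 1"
    and f: "bounded_difference_on S I f c" and C: "(\<Sum>i\<in>I. (c i)\<^sup>2) > 0" and t: "t > 0"
  shows "prod_expectation p S I (\<lambda>x. if f x - prod_expectation p S I f \<ge> t then 1 else 0)
           \<le> exp (- 2 * t\<^sup>2 / (\<Sum>i\<in>I. (c i)\<^sup>2))"
proof -
  define C where "C = (\<Sum>i\<in>I. (c i)\<^sup>2)"
  define E where "E = prod_expectation p S I f"
  define l where "l = 4 * t / C"
  have l: "l > 0" using C t by (simp add: l_def C_def)
  have "(if f x - E \<ge> t then 1 else 0) \<le> exp (l * (f x - E)) * exp (- (l * t))" for x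
    using l by (auto simp flip: exp_add)
  then have "prod_expectation p S I (\<lambda>x. if f x - E \<ge> t then 1 else 0)
      \<le> prod_expectation p S I (\<lambda>x. exp (l * (f x - E)) * exp (- (l * t)))"
    using p by (intro prod_expectation_mono)
  also have "\<dots> = prod_expectation p S I (\<lambda>x. exp (l * (f x - E))) * exp (- (l * t))"
    by (rule prod_expectation_mult_const)
  also have "\<dots> \<le> exp (l\<^sup>2 * C / 8) * exp (- (l * t))"
    using McDiarmid_mgf_bound[OF I S p p1 f l] by (simp add: C_def E_def)
  also have "\<dots> = exp (- 2 * t\<^sup>2 / C)"
    using C by (simp add: l_def C_def power2_eq_square field_simps flip: exp_add)
  finally show ?thesis by (simp add: C_def E_def)
qed

lemma McDiarmid_ineq_abs:
  assumes I: "finite I" and S: "finite S"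
    and p: "\<And>j s. j \<in> I \<Longrightarrow> s \<in> S \<Longrightarrow> 0 \<le> p j s" and p1: "\<And>j. j \<in> I \<Longrightarrow> (\<Sum>s\<in>S. p j s) = 1"
    and f: "bounded_difference_on S I f c" and C: "(\<Sum>i\<in>I. (c i)\<^sup>2) > 0" and t: "t > 0"
  shows "prod_expectation p S I (\<lambda>x. if \<bar>f x - prod_expectation p S I f\<bar> \<ge> t then 1 else 0)
           \<le> 2 * exp (- 2 * t\<^sup>2 / (\<Sum>i\<in>I. (c i)\<^sup>2))"
proof -
  have E_uminus: "prod_expectation p S I (\<lambda>x. - f x) = - prod_expectation p S I f"
    using prod_expectation_linear[of p S I "-1" f 0 f] by simp
  have "prod_expectation p S I (\<lambda>x. if \<bar>f x - prod_expectation p S I f\<bar> \<ge> t then 1 else 0)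
     \<le> prod_expectation p S I (\<lambda>x. 1 * (if f x - prod_expectation p S I f \<ge> t then 1 else 0)
          + 1 * (if - f x - prod_expectation p S I (\<lambda>x. - f x) \<ge> t then 1 else 0))"
    using p by (intro prod_expectation_mono) (auto simp: E_uminus)
  also have "\<dots> \<le> 2 * exp (- 2 * t\<^sup>2 / (\<Sum>i\<in>I. (c i)\<^sup>2))"
    unfolding prod_expectation_linear
    using McDiarmid_ineq_ge[of I S p f c t] McDiarmid_ineq_ge[of I S p "\<lambda>x. - f x" c t]
      bounded_difference_on_uminus[OF f] assms
    by simp
  finally show ?thesis .
qed

lemma (in prob_space) sum_prob_vimage_singleton:
  assumes S: "finite S" and X: "X \<in> measurable M (count_space S)"
  shows "(\<Sum>v\<in>S. prob (X -` {v} \<inter> space M)) = 1"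
proof -
  interpret D: prob_space "distr M (count_space S) X"
    using X by (rule prob_space_distr)
  have "(\<Sum>v\<in>S. prob (X -` {v} \<inter> space M)) = (\<Sum>v\<in>S. D.prob {v})"
    using X by (simp add: measure_distr)
  also have "\<dots> = D.prob S"
    using S by (intro D.finite_measure_eq_sum_singleton [symmetric]) auto
  also have "\<dots> = 1"
    using D.prob_space by simp
  finally show ?thesis .
qed

lemma (in prob_space) integral_indep_vars_count_space:
  assumes I: "I \<noteq> {}" "finite I" and S: "finite S"
    and X: "\<And>j. j \<in> I \<Longrightarrow> X j \<in> measurable M (count_space S)"
    and indep: "indep_vars (\<lambda>_. count_space S) X I"
  shows "(\<integral>\<omega>. G (restrict (\<lambda>j. X j \<omega>) I) \<partial>M)
           = prod_expectation (\<lambda>j v. prob (X j -` {v} \<inter> space M)) S I G"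
proof -
  define A where "A x = {\<omega> \<in> space M. restrict (\<lambda>j. X j \<omega>) I = x}" for x
  have A_eq: "A x = (\<Inter>j\<in>I. X j -` {x j} \<inter> space M)" if "x \<in> I \<rightarrow>\<^sub>E S" for x
    using that I(1) by (auto simp: A_def PiE_iff extensional_def fun_eq_iff)
  have A_events: "A x \<in> events" if "x \<in> I \<rightarrow>\<^sub>E S" for x
    unfolding A_eq[OF that] using I that
    by (intro sets.finite_INT measurable_sets[OF X]) (auto simp: PiE_iff)
  have A_prob: "prob (A x) = (\<Prod>j\<in>I. prob (X j -` {x j} \<inter> space M))" if "x \<in> I \<rightarrow>\<^sub>E S" for x
    unfolding A_eq[OF that] using that by (intro indep_varsD_finite[OF indep I]) auto
  have "G (restrict (\<lambda>j. X j \<omega>) I) = (\<Sum>x\<in>I \<rightarrow>\<^sub>E S. G x * indicator (A x) \<omega>)" if "\<omega> \<in> space M" for \<omega>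
  proof -
    have "restrict (\<lambda>j. X j \<omega>) I \<in> I \<rightarrow>\<^sub>E S"
      using measurable_space[OF X] that by auto
    then show ?thesis
      using that I S by (simp add: A_def indicator_def finite_PiE if_distrib [of "(*) _"] sum.delta)
  qed
  then have "(\<integral>\<omega>. G (restrict (\<lambda>j. X j \<omega>) I) \<partial>M)
      = (\<integral>\<omega>. (\<Sum>x\<in>I \<rightarrow>\<^sub>E S. G x * indicator (A x) \<omega>) \<partial>M)"
    by (rule Bochner_Integration.integral_cong [OF refl])
  also have "\<dots> = (\<Sum>x\<in>I \<rightarrow>\<^sub>E S. G x * prob (A x))"
    using A_events
    by (subst Bochner_Integration.integral_sum)
      (auto intro!: integrable_real_indicator simp: emeasure_eq_measure)
  also have "\<dots> = prod_expectation (\<lambda>j v. prob (X j -` {v} \<inter> space M)) S I G"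
    unfolding prod_expectation_def by (intro sum.cong refl) (simp add: A_prob mult.commute)
  finally show ?thesis .
qed

theorem (in prob_space) McDiarmid_inequality:
  assumes I: "finite I" and S: "finite S"
    and X: "\<And>j. j \<in> I \<Longrightarrow> X j \<in> measurable M (count_space S)"
    and indep: "indep_vars (\<lambda>_. count_space S) X I"
    and f: "bounded_difference_on S I f c" and t: "t > 0"
  shows "prob {\<omega> \<in> space M.
            \<bar>f (restrict (\<lambda>j. X j \<omega>) I) - (\<integral>\<omega>'. f (restrict (\<lambda>j. X j \<omega>') I) \<partial>M)\<bar> \<ge> t}
           \<le> 2 * exp (- 2 * t\<^sup>2 / (\<Sum>i\<in>I. (c i)\<^sup>2))"
proof (cases "(\<Sum>i\<in>I. (c i)\<^sup>2) = 0")
  case True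
  \<comment> \<open>the bound is then 2, as division by zero yields 0\<close>
  then show ?thesis using prob_le_1 by (simp add: order.trans [OF _ one_le_numeral])
next
  case False
  then have C: "(\<Sum>i\<in>I. (c i)\<^sup>2) > 0" and "I \<noteq> {}"
    using sum_nonneg[of I "\<lambda>i. (c i)\<^sup>2"] by auto
  define p where "p j v = prob (X j -` {v} \<inter> space M)" for j v
  have p1: "(\<Sum>v\<in>S. p j v) = 1" if "j \<in> I" for j
    unfolding p_def using S X[OF that] by (rule sum_prob_vimage_singleton)
  have E: "(\<integral>\<omega>. G (restrict (\<lambda>j. X j \<omega>) I) \<partial>M) = prod_expectation p S I G" for G
    unfolding p_def using \<open>I \<noteq> {}\<close> I S X indep by (rule integral_indep_vars_count_space)
  let ?tail = "\<lambda>x. if \<bar>f x - prod_expectation p S I f\<bar> \<ge> t then 1 else 0 :: real"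
  have "prob {\<omega> \<in> space M.
            \<bar>f (restrict (\<lambda>j. X j \<omega>) I) - (\<integral>\<omega>'. f (restrict (\<lambda>j. X j \<omega>') I) \<partial>M)\<bar> \<ge> t}
      = (\<integral>\<omega>. ?tail (restrict (\<lambda>j. X j \<omega>) I) \<partial>M)"
  proof -
    have "(\<integral>\<omega>. ?tail (restrict (\<lambda>j. X j \<omega>) I) \<partial>M) = (\<integral>\<omega>. indicator
        {\<omega> \<in> space M. \<bar>f (restrict (\<lambda>j. X j \<omega>) I) - prod_expectation p S I f\<bar> \<ge> t} \<omega> \<partial>M)"
      by (intro Bochner_Integration.integral_cong) (auto simp: indicator_def)
    then show ?thesis by (simp add: E Int_absorb2)
  qed
  also have "\<dots> \<le> 2 * exp (- 2 * t\<^sup>2 / (\<Sum>i\<in>I. (c i)\<^sup>2))"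
    unfolding E [of ?tail] using I S f C t p1 by (intro McDiarmid_ineq_abs) (auto simp: p_def)
  finally show ?thesis .
qed

lemma abs_diff_mult_one_minus_le:
  fixes q q' :: real
  assumes "0 \<le> q" "q \<le> 1" "0 \<le> q'" "q' \<le> 1"
  shows "\<bar>q * (1 - q) - q' * (1 - q')\<bar> \<le> \<bar>q - q'\<bar>"
proof -
  have "q * (1 - q) - q' * (1 - q') = (q - q') * (1 - q - q')" by algebra
  moreover have "\<bar>1 - q - q'\<bar> \<le> 1" using assms by auto
  ultimately show ?thesis by (simp add: abs_mult mult_left_le)
qed

lemma phat_nonneg: "0 \<le> phat M x v"
  by (simp add: phat_def sum_nonneg)

lemma phat_le_1: "phat M x v \<le> 1"
proof -
  have "(\<Sum>j\<in>{1..M}. if x j = v then 1 else 0) \<le> (\<Sum>j\<in>{1..M}. 1 :: real)"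
    by (intro sum_mono) auto
  then show ?thesis by (cases "M = 0") (simp_all add: phat_def divide_le_eq_1)
qed

lemma phat_fun_upd:
  assumes "i \<in> {1..M}"
  shows "phat M (x(i := y)) v
           = phat M x v + ((if y = v then 1 else 0) - (if x i = v then 1 else 0)) / real M"
proof -
  have "(\<Sum>j\<in>{1..M}. if (x(i := y)) j = v then 1 else 0 :: real)
      = (if y = v then 1 else 0) + (\<Sum>j\<in>{1..M} - {i}. if x j = v then 1 else 0)"
    using assms by (simp add: sum.remove [of _ i])
  also have "\<dots> = (if y = v then 1 else 0) - (if x i = v then 1 else 0)
                   + (\<Sum>j\<in>{1..M}. if x j = v then 1 else 0)"
    using assms by (simp add: sum.remove [of _ i])
  finally show ?thesis by (simp add: phat_def add_divide_distrib)
qed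

lemma Lfun_bounded_difference: "bounded_difference {1..k} M (Lfun k M) (\<lambda>_. 2 / real M)"
  unfolding bounded_difference_def
proof (intro ballI)
  fix i x y assume i: "i \<in> {1..M}" and y: "y \<in> {1..k}"
  let ?\<delta> = "\<lambda>v. ((if y = v then 1 else 0) + (if x i = v then 1 else 0)) / real M"
  have "\<bar>phat M x v * (1 - phat M x v) - phat M (x(i := y)) v * (1 - phat M (x(i := y)) v)\<bar> \<le> ?\<delta> v"
    for v
  proof -
    have "\<bar>phat M x v * (1 - phat M x v) - phat M (x(i := y)) v * (1 - phat M (x(i := y)) v)\<bar>
        \<le> \<bar>phat M x v - phat M (x(i := y)) v\<bar>"
      by (intro abs_diff_mult_one_minus_le phat_nonneg phat_le_1)
    also have "\<dots> = \<bar>(if y = v then 1 else 0) - (if x i = v then 1 else 0)\<bar> / real M"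
      using i by (simp add: phat_fun_upd)
    also have "\<dots> \<le> ?\<delta> v"
      by (intro divide_right_mono) auto
    finally show ?thesis .
  qed
  then have "\<bar>Lfun k M x - Lfun k M (x(i := y))\<bar> \<le> (\<Sum>v\<in>{1..k}. ?\<delta> v)"
    unfolding Lfun_def sum_subtractf [symmetric] by (intro order.trans [OF sum_abs] sum_mono)
  also have "\<dots> = (1 + (if x i \<in> {1..k} then 1 else 0)) / real M"
    using y by (simp add: sum.distrib flip: sum_divide_distrib)
  also have "\<dots> \<le> 2 / real M"
    by (intro divide_right_mono) auto
  finally show "\<bar>Lfun k M x - Lfun k M (x(i := y))\<bar> \<le> 2 / real M" .
qed

lemma Lfun_restrict: "Lfun k M (restrict x {1..M}) = Lfun k M x"
  by (simp add: Lfun_def phat_def)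

theorem lemma2:
  fixes P :: "'w measure" and X :: "nat \<Rightarrow> 'w \<Rightarrow> nat" and k M :: nat
  assumes "prob_space P"
    and "\<And>j. j \<in> {1..M} \<Longrightarrow> X j \<in> measurable P (count_space {1..k})"
    and "prob_space.indep_vars P (\<lambda>_. count_space {1..k}) X {1..M}"
    and "\<And>j. j \<in> {1..M} \<Longrightarrow>
           distr P (count_space {1..k}) (X j) = distr P (count_space {1..k}) (X 1)"
  shows "bounded_difference {1..k} M (Lfun k M) (\<lambda>_. 2 / real M) \<and>
         (\<forall>t>0. measure P {\<omega> \<in> space P.
                   \<bar>Lfun k M (\<lambda>j. X j \<omega>) - (\<integral>\<omega>'. Lfun k M (\<lambda>j. X j \<omega>') \<partial>P)\<bar> \<ge> t}
                \<le> 2 * exp (- (real M * t\<^sup>2 / 2)))"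
proof -
  interpret prob_space P by fact
  have bd: "bounded_difference {1..k} M (Lfun k M) (\<lambda>_. 2 / real M)"
    by (rule Lfun_bounded_difference)
  have "prob {\<omega> \<in> space P.
           \<bar>Lfun k M (\<lambda>j. X j \<omega>) - (\<integral>\<omega>'. Lfun k M (\<lambda>j. X j \<omega>') \<partial>P)\<bar> \<ge> t}
          \<le> 2 * exp (- (real M * t\<^sup>2 / 2))" if t: "t > 0" for t
  proof -
    have "prob {\<omega> \<in> space P.
           \<bar>Lfun k M (\<lambda>j. X j \<omega>) - (\<integral>\<omega>'. Lfun k M (\<lambda>j. X j \<omega>') \<partial>P)\<bar> \<ge> t}
          \<le> 2 * exp (- 2 * t\<^sup>2 / (\<Sum>i\<in>{1..M}. (2 / real M)\<^sup>2))"
      using McDiarmid_inequality [of "{1..M}" "{1..k}" X "Lfun k M" "\<lambda>_. 2 / real M" t,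
          unfolded Lfun_restrict] assms(2,3) bd t
      by (simp add: bounded_difference_eq_on)
    also have "\<dots> = 2 * exp (- (real M * t\<^sup>2 / 2))"
      by (cases "M = 0") (simp_all add: power2_eq_square field_simps)
    finally show ?thesis .
  qed
  with bd show ?thesis by blast
qed

end
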